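(* For any filtration $\mathcal{F}_{t-1}$, conditioned on the event $E^f(t)$, we have for all $x\in\mathcal{Q}$ $$\mathbb{P}\left(f_t(x)>\rho_mf(x)\mid\mathcal{F}_{t-1}\right)\ge p,\qquad p=\frac{1}{4e\sqrt{\pi}},$$ where $f_t$ is sampled from $\mathcal{GP}(\mu_{t-1}(\cdot),\nu_t^2\sigma^2_{t-1}(\cdot))$ given $\mathcal{F}_{t-1}$.
   Context: Setting. Let $\mathcal{Q}\subset\mathbb{R}^n$ be finite, $k$ a positive semidefinite kernel on $\mathcal{Q}$ with $k\le1$, and $f$ in the RKHS of $k$ with $\|f\|_k\le\mathcal{B}_f$. Queries $x_1,x_2,\ldots\in\mathcal{Q}$ are selected sequentially; feedback $y_t=f(x_t)+\epsilon_t$ with $R$-sub-Gaussian $\epsilon_t$ and $|y_t|\le\mathcal{B}_y$, observed after a random delay $d_t\in\{0,1,\ldots\}$ drawn from a distribution $\mathcal{D}$. For an integer $m\ge1$, $\rho_m=\mathbb{P}(d_s\le m)$, censored feedback $\tilde y_{s,t}=y_s\mathbb{1}\{d_s\le\min(m,t-s)\}$. With $\lambda>0$: $\mu_{t-1}(x)=\mathbf{k}_{t-1}(x)^\top(\mathbf{K}_{t-1}+\lambda I)^{-1}\tilde{\mathbf{y}}_{t-1}$, $\sigma^2_{t-1}(x,x')=k(x,x')-\mathbf{k}_{t-1}(x)^\top(\mathbf{K}_{t-1}+\lambda I)^{-1}\mathbf{k}_{t-1}(x')$, $\sigma^2_{t-1}(x)=\sigma^2_{t-1}(x,x)$, $\mathbf{k}_{t-1}(x)=(k(x,x_i))_{i\le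 t-1}$, $\mathbf{K}_{t-1}=(k(x_i,x_j))_{i,j\le t-1}$, $\tilde{\mathbf{y}}_{t-1}=(\tilde y_{s,t})_{s\le t-1}$. $\gamma_t=\max_A\frac12\log\det(I+\lambda^{-1}\mathbf{K}_A)$ over collections $A$ of $t$ points. For $\delta\in(0,1)$: $\beta_t=\mathcal{B}_f+(R+\mathcal{B}_y)\sqrt{2(\gamma_{t-1}+1+\log(4/\delta))}$, $\nu_t=\mathcal{B}_y\sum_{s=t-m}^{t-1}\sigma_{t-1}(x_s)+\beta_t$ (terms with $s<1$ omitted). $\mathcal{F}_{t-1}$ is the history of inputs and observations up to iteration $t-1$. $E^f(t)$ is the event that $|\mu_{t-1}(x)-\rho_mf(x)|\le\nu_t\sigma_{t-1}(x)$ for all $x\in\mathcal{Q}$. *)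

theory Defs
  imports "HOL-Probability.Probability"
          "Jordan_Normal_Form.Gauss_Jordan_Elimination"
          "Jordan_Normal_Form.Determinant"
begin

definition hist :: "(nat \<Rightarrow> 'a) \<Rightarrow> nat \<Rightarrow> 'a list" where
  "hist xs t = map xs [1..<t]"

definition gram :: "('a \<Rightarrow> 'a \<Rightarrow> real) \<Rightarrow> 'a list \<Rightarrow> real mat" where
  "gram k A = mat (length A) (length A) (\<lambda>(i,j). k (A!i) (A!j))"

definition kvec :: "('a \<Rightarrow> 'a \<Rightarrow> real) \<Rightarrow> 'a list \<Rightarrow> 'a \<Rightarrow> real vec" where
  "kvec k A x = vec (length A) (\<lambda>i. k x (A!i))"

definition reg_inv :: "('a \<Rightarrow> 'a \<Rightarrow> real) \<Rightarrow> real \<Rightarrow> 'a list \<Rightarrow> real mat" where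
  "reg_inv k lam A = the (mat_inverse (gram k A + lam \<cdot>\<^sub>m 1\<^sub>m (length A)))"

definition post_mean :: "('a \<Rightarrow> 'a \<Rightarrow> real) \<Rightarrow> real \<Rightarrow> 'a list \<Rightarrow> real vec \<Rightarrow> 'a \<Rightarrow> real" where
  "post_mean k lam A yv x = kvec k A x \<bullet> (reg_inv k lam A *\<^sub>v yv)"

definition post_cov :: "('a \<Rightarrow> 'a \<Rightarrow> real) \<Rightarrow> real \<Rightarrow> 'a list \<Rightarrow> 'a \<Rightarrow> 'a \<Rightarrow> real" where
  "post_cov k lam A x x' = k x x' - kvec k A x \<bullet> (reg_inv k lam A *\<^sub>v kvec k A x')"

definition post_sd :: "('a \<Rightarrow> 'a \<Rightarrow> real) \<Rightarrow> real \<Rightarrow> 'a list \<Rightarrow> 'a \<Rightarrow> real" where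
  "post_sd k lam A x = sqrt (post_cov k lam A x x)"

definition ytil :: "(nat \<Rightarrow> real) \<Rightarrow> (nat \<Rightarrow> nat) \<Rightarrow> nat \<Rightarrow> nat \<Rightarrow> real vec" where
  "ytil y d m t = vec (t - 1) (\<lambda>i. let s = i + 1 in if d s \<le> min m (t - s) then y s else 0)"

definition max_info_gain :: "('a \<Rightarrow> 'a \<Rightarrow> real) \<Rightarrow> real \<Rightarrow> 'a set \<Rightarrow> nat \<Rightarrow> real" where
  "max_info_gain k lam Q n =
     Max {1/2 * ln (det (1\<^sub>m n + (1 / lam) \<cdot>\<^sub>m gram k A)) | A. set A \<subseteq> Q \<and> length A = n}"

definition beta_t :: "('a \<Rightarrow> 'a \<Rightarrow> real) \<Rightarrow> real \<Rightarrow> 'a set \<Rightarrow> real \<Rightarrow> real \<Rightarrow> real \<Rightarrow> real \<Rightarrow> nat \<Rightarrow> real" where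
  "beta_t k lam Q Bf R By \<delta> t =
     Bf + (R + By) * sqrt (2 * (max_info_gain k lam Q (t - 1) + 1 + ln (4 / \<delta>)))"

definition nu_t :: "('a \<Rightarrow> 'a \<Rightarrow> real) \<Rightarrow> real \<Rightarrow> 'a set \<Rightarrow> real \<Rightarrow> real \<Rightarrow> real \<Rightarrow> real
                    \<Rightarrow> nat \<Rightarrow> (nat \<Rightarrow> 'a) \<Rightarrow> nat \<Rightarrow> real" where
  "nu_t k lam Q Bf R By \<delta> m xs t =
     By * (\<Sum>s\<in>{s\<in>{1..<t}. t \<le> s + m}. post_sd k lam (hist xs t) (xs s))
     + beta_t k lam Q Bf R By \<delta> t"

end

theory Submission
  imports Defs
begin

text \<open>On E^f(t) the threshold rho f(x) lies at most one standard deviation s above the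
  mean of the Gaussian f_t(x), so the whole window between one and two standard deviations
  above the mean lies above the threshold. On that window the density is at least
  exp(-2) / (s sqrt(2 pi)), so the window alone carries probability at least
  exp(-2) / sqrt(2 pi) >= 1 / (4 e sqrt pi), because e sqrt 2 <= 4.\<close>

lemma exp_one_mult_sqrt_two_le_four: "exp 1 * sqrt 2 \<le> (4::real)"
proof -
  have "sqrt 2 < (1415/1000::real)"
    by (rule real_less_lsqrt) (auto simp: power2_eq_square)
  then have "exp 1 * sqrt 2 \<le> (272/100) * (1415/1000::real)"
    using e_less_272 by (intro mult_mono) auto
  then show ?thesis by simp
qed

lemma inverse_four_e_sqrt_pi_le: "1 / (4 * exp 1 * sqrt pi) \<le> exp (-2) / sqrt (2 * pi)"
proof -
  have "exp 1 * exp 1 * (sqrt 2 * sqrt pi) \<le> 4 * exp 1 * sqrt pi"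
    using mult_right_mono[OF exp_one_mult_sqrt_two_le_four, of "exp 1 * sqrt pi"]
    by (simp add: algebra_simps)
  then have "1 / (4 * exp 1 * sqrt pi) \<le> 1 / (exp 1 * exp 1 * (sqrt 2 * sqrt pi))"
    by (intro divide_left_mono) auto
  also have "\<dots> = exp (-2) / sqrt (2 * pi)"
    by (simp add: real_sqrt_mult exp_minus exp_add[symmetric] divide_inverse)
  finally show ?thesis .
qed

lemma normal_density_ge_within_two_sd:
  assumes "s > 0" and "\<bar>x - mu\<bar> \<le> 2 * s"
  shows "exp (-2) / (s * sqrt (2 * pi)) \<le> normal_density mu s x"
proof -
  have "(x - mu)\<^sup>2 \<le> (2 * s)\<^sup>2"
    using assms by (metis abs_le_square_iff abs_of_pos mult_pos_pos zero_less_numeral)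
  then have "-2 \<le> -(x - mu)\<^sup>2 / (2 * s\<^sup>2)"
    using \<open>s > 0\<close> by (simp add: field_simps power2_eq_square)
  moreover have "sqrt (2 * pi * s\<^sup>2) = s * sqrt (2 * pi)"
    using \<open>s > 0\<close> by (simp add: real_sqrt_mult)
  ultimately show ?thesis
    unfolding normal_density_def using \<open>s > 0\<close> by (simp add: divide_right_mono)
qed

lemma prob_normal_greater_ge:
  fixes X :: "'w \<Rightarrow> real"
  assumes "prob_space M" and "s > 0" and "a \<le> mu + s"
    and X: "distributed M lborel X (normal_density mu s)"
  shows "exp (-2) / sqrt (2 * pi) \<le> measure M {\<omega>\<in>space M. a < X \<omega>}"
proof -
  interpret prob_space M by fact
  define c where "c = exp (-2) / (s * sqrt (2 * pi))"
  define I where "I = {mu + s <.. mu + 2 * s}"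
  have window_below_density:
    "ennreal c * indicator I x \<le> ennreal (normal_density mu s x) * indicator {a<..} x" for x
  proof (cases "x \<in> I")
    case True
    then have "c \<le> normal_density mu s x"
      unfolding c_def I_def using \<open>s > 0\<close> by (intro normal_density_ge_within_two_sd) auto
    then show ?thesis
      using True \<open>a \<le> mu + s\<close> by (auto simp: I_def ennreal_leI)
  qed simp
  have "ennreal (c * s) = (\<integral>\<^sup>+x. ennreal c * indicator I x \<partial>lborel)"
    using \<open>s > 0\<close> by (simp add: c_def I_def nn_integral_cmult_indicator ennreal_mult[symmetric])
  also have "\<dots> \<le> (\<integral>\<^sup>+x. ennreal (normal_density mu s x) * indicator {a<..} x \<partial>lborel)"
    by (intro nn_integral_mono window_below_density)
  also have "\<dots> = emeasure M (X -` {a<..} \<inter> space M)"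
    by (rule distributed_emeasure[OF X, symmetric]) simp
  also have "X -` {a<..} \<inter> space M = {\<omega>\<in>space M. a < X \<omega>}"
    by auto
  finally have "c * s \<le> prob {\<omega>\<in>space M. a < X \<omega>}"
    by (simp add: emeasure_eq_measure ennreal_le_iff)
  then show ?thesis
    using \<open>s > 0\<close> by (simp add: c_def)
qed

theorem lemma3:
  fixes Q :: "'a set" and k :: "'a \<Rightarrow> 'a \<Rightarrow> real" and f :: "'a \<Rightarrow> real"
    and xs :: "nat \<Rightarrow> 'a" and y :: "nat \<Rightarrow> real" and d :: "nat \<Rightarrow> nat"
    and D :: "nat pmf" and m t :: nat and lam \<delta> R Bf By :: real
    and M :: "'w measure" and ft :: "'w \<Rightarrow> 'a \<Rightarrow> real"
  defines "\<rho> \<equiv> measure_pmf.prob D {..m}"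
  defines "\<mu> \<equiv> post_mean k lam (hist xs t) (ytil y d m t)"
  defines "\<sigma> \<equiv> post_sd k lam (hist xs t)"
  defines "\<nu> \<equiv> nu_t k lam Q Bf R By \<delta> m xs t"
  assumes "finite Q" and "Q \<noteq> {}"
    and "\<forall>x\<in>Q. \<forall>x'\<in>Q. k x x' = k x' x"
    and "\<forall>A c. set A \<subseteq> Q \<longrightarrow> (\<Sum>i<length A. \<Sum>j<length A. c i * c j * k (A!i) (A!j)) \<ge> 0"
    and "\<forall>x\<in>Q. \<forall>x'\<in>Q. k x x' \<le> 1"
    and "\<forall>s. xs s \<in> Q" and "\<forall>s. \<bar>y s\<bar> \<le> By"
    and "m \<ge> 1" and "t \<ge> 1" and "lam > 0" and "0 < \<delta>" and "\<delta> < 1"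
    \<comment> \<open>event E^f(t)\<close>
    and Ef: "\<forall>x\<in>Q. \<bar>\<mu> x - \<rho> * f x\<bar> \<le> \<nu> * \<sigma> x"
    \<comment> \<open>f_t ~ GP(mu_{t-1}, nu_t^2 sigma^2_{t-1}) given F_{t-1}: marginal laws\<close>
    and "prob_space M"
    and GP: "\<forall>x\<in>Q. \<nu> * \<sigma> x > 0 \<longrightarrow>
               distributed M lborel (\<lambda>\<omega>. ft \<omega> x) (normal_density (\<mu> x) (\<nu> * \<sigma> x))"
  shows "\<forall>x\<in>Q. \<nu> * \<sigma> x > 0 \<longrightarrow>
           measure M {\<omega>\<in>space M. ft \<omega> x > \<rho> * f x} \<ge> 1 / (4 * exp 1 * sqrt pi)"
proof (intro ballI impI)
  fix x assume "x \<in> Q" and pos: "\<nu> * \<sigma> x > 0"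
  have "\<rho> * f x \<le> \<mu> x + \<nu> * \<sigma> x"
    using Ef \<open>x \<in> Q\<close> by (auto simp: abs_le_iff)
  then have "exp (-2) / sqrt (2 * pi) \<le> measure M {\<omega>\<in>space M. \<rho> * f x < ft \<omega> x}"
    using GP \<open>x \<in> Q\<close> pos by (intro prob_normal_greater_ge[OF \<open>prob_space M\<close>]) auto
  then show "measure M {\<omega>\<in>space M. ft \<omega> x > \<rho> * f x} \<ge> 1 / (4 * exp 1 * sqrt pi)"
    using inverse_four_e_sqrt_pi_le by simp
qed

end
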